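(* For all $1\le i\le n$ and $1\le r\le n$, $$|\mathcal{I}^{(r)}_{x_i}(P_n^* )|\le |\mathcal{I}^{(r)}_{p_i}(P_n^* )|.$$
   Context: $\mathcal{I}^{(r)}_v(G)$ denotes the family of independent $r$-sets (sets of $r$ pairwise non-adjacent vertices) of a graph $G$ containing the vertex $v$. For a graph $G$ with vertices $x_1,\dots,x_n$, the pendant graph $G^*$ has vertex set $\{x_1,\dots,x_n\}\sqcup\{p_1,\dots,p_n\}$ and edge set $E(G)\sqcup\{x_1p_1,\dots,x_np_n\}$. $P_n$ is the path with vertices $x_1,\dots,x_n$ and edges $x_jx_{j+1}$, $1\le j\le n-1$, and $P_n^*$ its pendant graph. *)

theory Defs
  imports Main
begin

record 'a sgraph =
  verts :: "'a set"
  edges :: "'a set set"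

definition independent_set :: "'a sgraph \<Rightarrow> 'a set \<Rightarrow> bool" where
  "independent_set G S \<longleftrightarrow> S \<subseteq> verts G \<and> (\<forall>u\<in>S. \<forall>v\<in>S. {u, v} \<notin> edges G)"

definition indep_r_sets_at :: "'a sgraph \<Rightarrow> nat \<Rightarrow> 'a \<Rightarrow> 'a set set" where
  "indep_r_sets_at G r v = {S. independent_set G S \<and> card S = r \<and> v \<in> S}"

(* Pendant graph G^*: vertex x becomes Inl x, its pendant p_x is Inr x *)
definition pendant :: "'a sgraph \<Rightarrow> ('a + 'a) sgraph" where
  "pendant G = \<lparr> verts = Inl ` verts G \<union> Inr ` verts G,
                 edges = (\<lambda>e. Inl ` e) ` edges G \<union> {{Inl x, Inr x} | x. x \<in> verts G} \<rparr>"

(* Path P_n on vertices x_1..x_n (vertex x_j represented by j) with edges x_j x_(j+1) *)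
definition path_graph :: "nat \<Rightarrow> nat sgraph" where
  "path_graph n = \<lparr> verts = {1..n}, edges = {{j, j + 1} | j. 1 \<le> j \<and> j + 1 \<le> n} \<rparr>"

end

theory Submission
  imports Defs
begin

text \<open>Replacing the vertex by its pendant leaf maps independent sets containing the vertex
  injectively to independent sets containing the leaf: the leaf is adjacent only to the
  vertex that was removed.\<close>

lemma finite_indep_r_sets_at:
  assumes "finite (verts G)"
  shows "finite (indep_r_sets_at G r v)"
  by (rule finite_subset[of _ "Pow (verts G)"])
     (use assms in \<open>auto simp: indep_r_sets_at_def independent_set_def\<close>)

lemma indep_r_sets_at_swap_leaf:
  assumes q: "q \<in> verts G"
    and pq: "{p, q} \<in> edges G"
    and leaf: "\<And>w. {q, w} \<in> edges G \<Longrightarrow> w = p"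
    and S: "S \<in> indep_r_sets_at G r p"
    and fin: "finite (verts G)"
  shows "insert q (S - {p}) \<in> indep_r_sets_at G r q"
proof -
  have ind: "independent_set G S" and card_S: "card S = r" and p_in: "p \<in> S"
    using S by (auto simp: indep_r_sets_at_def)
  have q_notin: "q \<notin> S"
    using ind p_in pq by (auto simp: independent_set_def)
  have "finite S"
    using ind fin by (meson independent_set_def finite_subset)
  then have "card (insert q (S - {p})) = Suc (card (S - {p}))"
    using q_notin by simp
  also have "\<dots> = r"
    using card_Suc_Diff1[OF \<open>finite S\<close> p_in] card_S by simp
  finally have "card (insert q (S - {p})) = r" .
  moreover have "independent_set G (insert q (S - {p}))"
    unfolding independent_set_def
  proof (intro conjI ballI)
    show "insert q (S - {p}) \<subseteq> verts G"
      using ind q by (auto simp: independent_set_def)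
  next
    fix u v assume u: "u \<in> insert q (S - {p})" and v: "v \<in> insert q (S - {p})"
    have p_notin: "p \<notin> insert q (S - {p})"
      using p_in q_notin by auto
    show "{u, v} \<notin> edges G"
    proof
      assume uv: "{u, v} \<in> edges G"
      consider "u = q" | "v = q" | "u \<in> S" "v \<in> S"
        using u v by auto
      then show False
      proof cases
        case 1
        then show False
          using leaf[of v] uv v p_notin by auto
      next
        case 2
        then have "{q, u} \<in> edges G"
          using uv by (simp add: insert_commute)
        then show False
          using leaf[of u] u p_notin by auto
      next
        case 3
        then show False
          using ind uv by (auto simp: independent_set_def)
      qed
    qed
  qed
  ultimately show ?thesis
    by (simp add: indep_r_sets_at_def)
qed

lemma card_indep_r_sets_at_le_leaf:
  assumes fin: "finite (verts G)"
    and q: "q \<in> verts G"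
    and pq: "{p, q} \<in> edges G"
    and leaf: "\<And>w. {q, w} \<in> edges G \<Longrightarrow> w = p"
  shows "card (indep_r_sets_at G r p) \<le> card (indep_r_sets_at G r q)"
proof (rule card_inj_on_le)
  let ?swap = "\<lambda>S. insert q (S - {p})"
  show "inj_on ?swap (indep_r_sets_at G r p)"
  proof (rule inj_onI)
    fix S T assume S: "S \<in> indep_r_sets_at G r p" and T: "T \<in> indep_r_sets_at G r p"
      and eq: "?swap S = ?swap T"
    have undo: "insert p (?swap X - {q}) = X" if "X \<in> indep_r_sets_at G r p" for X
      using that pq by (auto simp: indep_r_sets_at_def independent_set_def)
    show "S = T"
      using undo[OF S] undo[OF T] eq by simp
  qed
  show "?swap ` indep_r_sets_at G r p \<subseteq> indep_r_sets_at G r q"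
    using indep_r_sets_at_swap_leaf[OF q pq leaf _ fin] by blast
  show "finite (indep_r_sets_at G r q)"
    using fin by (rule finite_indep_r_sets_at)
qed

lemma pendant_edge_Inr:
  assumes "{Inr v, w} \<in> edges (pendant G)"
  shows "w = Inl v"
  using assms by (auto simp: pendant_def doubleton_eq_iff)

theorem lemma5:
  fixes n i r :: nat
  assumes "1 \<le> i" "i \<le> n" "1 \<le> r" "r \<le> n"
  shows "card (indep_r_sets_at (pendant (path_graph n)) r (Inl i))
           \<le> card (indep_r_sets_at (pendant (path_graph n)) r (Inr i))"
proof (rule card_indep_r_sets_at_le_leaf)
  have "i \<in> verts (path_graph n)"
    using assms by (simp add: path_graph_def)
  then show "Inr i \<in> verts (pendant (path_graph n))"
    and "{Inl i, Inr i} \<in> edges (pendant (path_graph n))"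
    by (auto simp: pendant_def)
  show "finite (verts (pendant (path_graph n)))"
    by (simp add: pendant_def path_graph_def)
qed (rule pendant_edge_Inr)

end
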